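(* Let $\Sigma$ be a canonical ambiguous experiment. Then $\tau^{*} \in BR(\Sigma)$ if and only if there exists $\pi \in K^{*}(\Sigma)$ such that for all $a, b \in A$, $$\sum_{\omega \in \Omega} \pi(\omega,a)\,[u_r(b,\omega) - u_r(a,\omega)] \le 0.$$
   Context: Setting: $\Omega$ is a finite set of states, $A$ a finite set of receiver actions, $u_r: A \times \Omega \to \mathbb{R}$ the receiver's payoff. $P \subseteq \Delta(\Omega)$ is a nonempty closed convex set of priors; the receiver has maxmin expected utility preferences. A canonical experiment is $\sigma: \Omega \to \Delta(A)$; a canonical ambiguous experiment is a nonempty closed convex set $\Sigma$ of canonical experiments. A receiver strategy is $\tau: A \to \Delta(A)$. $u_r(p,\sigma,\tau) = \sum_{\omega,m,a} p(\omega)\sigma(m\mid\omega)\tau(a\mid m)u_r(a,\omega)$, $U_r(\Sigma,\tau) = \min_{p \in P}\min_{\sigma \in \Sigma} u_r(p,\sigma,\tau)$, and $BR(\Sigma) = \arg\max_{\tau} U_r(\Sigma,\tau)$ over all $\tau: A \to \Delta(A)$. The obedient strategy $\tau^{*}$ is $\tau^{*}(a\mid a) = 1$ for all $a$. For $p \in P$, $\sigma \in \Sigma$, $\pi^{(p,\sigma)} \in \Delta(\Omega \times A)$ is $\pi^{(p,\sigma)}(\omega,a) = p(\omega)\sigma(a\mid\omega)$; $\Pi(\Sigma) = \{\pi^{(p,\sigma)} : p \in P, \sigma \in \Sigma\}$; $\overline{co}(\Pi(\Sigma))$ is its closed convex hull; and $K^{*}(\Sigma) = \arg\min_{\pi \in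 \overline{co}(\Pi(\Sigma))} \sum_{a,\omega} \pi(\omega,a) u_r(a,\omega)$. *)

theory Defs
  imports "HOL-Analysis.Analysis"
begin

text \<open>States are the finite type 'w, actions the finite type 'a.
  A distribution on a finite type is a vector in the probability simplex.\<close>

definition prob_simplex :: "(real^'n) set" where
  "prob_simplex = {p. (\<forall>i. 0 \<le> p $ i) \<and> (\<Sum>i\<in>UNIV. p $ i) = 1}"

text \<open>Canonical experiment: sigma $ w $ m = sigma(m | w).\<close>
definition canonical_experiment :: "real^'a^'w \<Rightarrow> bool" where
  "canonical_experiment \<sigma> \<longleftrightarrow> (\<forall>\<omega>. \<sigma> $ \<omega> \<in> prob_simplex)"

definition canonical_ambiguous_experiment :: "(real^'a^'w) set \<Rightarrow> bool" where
  "canonical_ambiguous_experiment S \<longleftrightarrow>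
     S \<noteq> {} \<and> closed S \<and> convex S \<and> (\<forall>\<sigma>\<in>S. canonical_experiment \<sigma>)"

text \<open>Receiver strategy: tau $ m $ a = tau(a | m).\<close>
definition receiver_strategy :: "real^'a^'a \<Rightarrow> bool" where
  "receiver_strategy \<tau> \<longleftrightarrow> (\<forall>m. \<tau> $ m \<in> prob_simplex)"

definition ur_val :: "('a \<Rightarrow> 'w \<Rightarrow> real) \<Rightarrow> real^'w \<Rightarrow> real^'a^'w \<Rightarrow> real^'a^'a \<Rightarrow> real" where
  "ur_val u p \<sigma> \<tau> =
     (\<Sum>\<omega>\<in>UNIV. \<Sum>m\<in>UNIV. \<Sum>a\<in>UNIV. p $ \<omega> * \<sigma> $ \<omega> $ m * \<tau> $ m $ a * u a \<omega>)"

text \<open>Maxmin utility: min over priors and experiments (an infimum, attained by compactness).\<close>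
definition Ur :: "('a \<Rightarrow> 'w \<Rightarrow> real) \<Rightarrow> (real^'w) set \<Rightarrow> (real^'a^'w) set \<Rightarrow> real^'a^'a \<Rightarrow> real" where
  "Ur u P S \<tau> = Inf {ur_val u p \<sigma> \<tau> | p \<sigma>. p \<in> P \<and> \<sigma> \<in> S}"

definition BR :: "('a \<Rightarrow> 'w \<Rightarrow> real) \<Rightarrow> (real^'w) set \<Rightarrow> (real^'a^'w) set \<Rightarrow> (real^'a^'a) set" where
  "BR u P S = {\<tau>. receiver_strategy \<tau> \<and>
      (\<forall>\<tau>'. receiver_strategy \<tau>' \<longrightarrow> Ur u P S \<tau>' \<le> Ur u P S \<tau>)}"

definition obedient :: "real^'a^'a" where
  "obedient = (\<chi> m a. if a = m then 1 else 0)"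

text \<open>Joint distribution pi^(p,sigma), indexed as pi $ w $ a = pi(w,a).\<close>
definition joint :: "real^'w \<Rightarrow> real^'a^'w \<Rightarrow> real^'a^'w" where
  "joint p \<sigma> = (\<chi> \<omega> a. p $ \<omega> * \<sigma> $ \<omega> $ a)"

definition Pi_set :: "(real^'w) set \<Rightarrow> (real^'a^'w) set \<Rightarrow> (real^'a^'w) set" where
  "Pi_set P S = {joint p \<sigma> | p \<sigma>. p \<in> P \<and> \<sigma> \<in> S}"

definition exp_payoff :: "('a \<Rightarrow> 'w \<Rightarrow> real) \<Rightarrow> real^'a^'w \<Rightarrow> real" where
  "exp_payoff u \<pi> = (\<Sum>a\<in>UNIV. \<Sum>\<omega>\<in>UNIV. \<pi> $ \<omega> $ a * u a \<omega>)"

definition Kstar :: "('a \<Rightarrow> 'w \<Rightarrow> real) \<Rightarrow> (real^'w) set \<Rightarrow> (real^'a^'w) set \<Rightarrow> (real^'a^'w) set" where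
  "Kstar u P S = {\<pi> \<in> closure (convex hull (Pi_set P S)).
      \<forall>\<pi>'\<in>closure (convex hull (Pi_set P S)). exp_payoff u \<pi> \<le> exp_payoff u \<pi>'}"

end

theory Submission
  imports Defs
begin

text \<open>
  Let \<open>D \<pi>\<close> be the matrix of gains from deviating from recommendation \<open>a\<close> to \<open>b\<close> under the
  joint distribution \<open>\<pi>\<close>. At every \<open>\<pi>\<close>, a strategy \<open>\<tau>\<close> earns the obedient payoff plus
  \<open>\<tau> \<bullet> D \<pi>\<close>, and the worst case over \<open>\<Pi>(\<Sigma>)\<close> is the minimum of a linear functional
  over the compact closed convex hull \<open>K\<close>.

  If some \<open>\<pi> \<in> K*\<close> has \<open>D \<pi> \<le> 0\<close>, every \<open>\<tau>\<close> thus earns at most the obedient payoff at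
  \<open>\<pi>\<close>, which is the obedient worst case. Conversely, if obedience is a best response, moving
  mass \<open>e y(a,b)\<close> from \<open>a\<close> to \<open>b\<close> (with \<open>y \<ge> 0\<close>) cannot raise the worst case; letting
  \<open>e \<rightarrow> 0\<close> and using compactness of \<open>K\<close> gives \<open>\<pi> \<in> K*\<close> with \<open>y \<bullet> D \<pi> \<le> 0\<close>. As
  \<open>D(K*)\<close> is compact and convex, separating it from the nonpositive orthant yields a single
  \<open>\<pi> \<in> K*\<close> with \<open>D \<pi> \<le> 0\<close>.
\<close>

lemma inner_nested_vec:
  "(x :: real^'a::finite^'w::finite) \<bullet> z = (\<Sum>\<omega>\<in>UNIV. \<Sum>a\<in>UNIV. x $ \<omega> $ a * z $ \<omega> $ a)"
  by (simp add: inner_vec_def)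

lemma nonneg_Basis_iff_nested:
  fixes z :: "real^'m^'n"
  shows "(\<forall>b\<in>Basis. 0 \<le> z \<bullet> b) \<longleftrightarrow> (\<forall>i j. 0 \<le> z $ i $ j)"
  by (auto simp: Basis_vec_def inner_axis)

lemma Inf_inner_le_closure_convex_hull:
  fixes X :: "'v::real_inner set"
  assumes "bounded X" and "z \<in> closure (convex hull X)"
  shows "Inf ((\<lambda>x. w \<bullet> x) ` X) \<le> w \<bullet> z"
proof -
  let ?m = "Inf ((\<lambda>x. w \<bullet> x) ` X)"
  have "bdd_below ((\<lambda>x. w \<bullet> x) ` X)"
    using bounded_linear_image[OF assms(1) bounded_linear_inner_right] by (rule bounded_imp_bdd_below)
  then have "X \<subseteq> {x. ?m \<le> w \<bullet> x}" by (auto intro: cInf_lower)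
  then have "closure (convex hull X) \<subseteq> {x. ?m \<le> w \<bullet> x}"
    by (intro closure_minimal hull_minimal) (auto simp: convex_halfspace_ge closed_halfspace_ge)
  then show ?thesis using assms(2) by blast
qed

lemma closure_convex_hull_attains_Inf_inner:
  fixes X :: "'v::euclidean_space set"
  assumes "bounded X" and "X \<noteq> {}"
  shows "\<exists>z\<in>closure (convex hull X). w \<bullet> z \<le> Inf ((\<lambda>x. w \<bullet> x) ` X)"
proof -
  let ?K = "closure (convex hull X)"
  have "X \<subseteq> ?K" using hull_subset[of X convex] closure_subset by (rule subset_trans)
  moreover have "compact ?K" using assms(1) by (simp add: bounded_convex_hull)
  moreover have "?K \<noteq> {}" using assms(2) by simp
  ultimately have "\<exists>z\<in>?K. \<forall>x\<in>?K. w \<bullet> z \<le> w \<bullet> x"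
    by (intro continuous_attains_inf continuous_intros)
  then obtain z where z: "z \<in> ?K" "\<forall>x\<in>?K. w \<bullet> z \<le> w \<bullet> x" by blast
  have "w \<bullet> z \<le> Inf ((\<lambda>x. w \<bullet> x) ` X)"
    using assms(2) z(2) \<open>X \<subseteq> ?K\<close> by (intro cInf_greatest) auto
  then show ?thesis using z(1) by blast
qed

lemma inner_minimizers_eq:
  "{x \<in> K. \<forall>x'\<in>K. w \<bullet> x \<le> w \<bullet> x'} = K \<inter> (\<Inter>x'\<in>K. {x. w \<bullet> x \<le> w \<bullet> x'})"
  by auto

lemma compact_inner_minimizers:
  fixes K :: "'v::euclidean_space set"
  shows "compact K \<Longrightarrow> compact {x \<in> K. \<forall>x'\<in>K. w \<bullet> x \<le> w \<bullet> x'}"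
  unfolding inner_minimizers_eq by (intro compact_Int_closed closed_INT) (auto simp: closed_halfspace_le)

lemma convex_inner_minimizers:
  "convex K \<Longrightarrow> convex {x \<in> K. \<forall>x'\<in>K. w \<bullet> x \<le> w \<bullet> x'}"
  unfolding inner_minimizers_eq by (intro convex_Int convex_INT) (auto simp: convex_halfspace_le)

lemma exists_minimizer_nonpos_of_perturbed_le:
  fixes f g :: "'x::t2_space \<Rightarrow> real"
  assumes K: "compact K" and f: "continuous_on K f" and g: "continuous_on K g"
    and v: "\<forall>x\<in>K. v \<le> f x" and "0 < e0"
    and perturbed: "\<And>e. 0 < e \<Longrightarrow> e \<le> e0 \<Longrightarrow> \<exists>x\<in>K. f x + e * g x \<le> v"
  shows "\<exists>x\<in>K. f x \<le> v \<and> g x \<le> 0"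
proof -
  define A where "A = K \<inter> g -` {..0}"
  obtain M where M: "0 < M" "\<forall>x\<in>K. \<bar>g x\<bar> \<le> M"
    using compact_imp_bounded[OF compact_continuous_image[OF g K]] by (auto simp: bounded_pos)
  have near: "\<exists>x\<in>A. f x \<le> v + \<delta>" if "0 < \<delta>" for \<delta>
  proof -
    define e where "e = min e0 (\<delta> / M)"
    have e: "0 < e" "e \<le> e0" "e \<le> \<delta> / M"
      using \<open>0 < e0\<close> \<open>0 < \<delta>\<close> M(1) by (simp_all add: e_def)
    have "e * M \<le> \<delta>" using e(3) M(1) by (simp add: pos_le_divide_eq)
    obtain x where x: "x \<in> K" "f x + e * g x \<le> v" using perturbed e(1,2) by blast
    have "v \<le> f x" using v x(1) by blast
    then have "e * g x \<le> 0" using x(2) by linarith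
    then have "g x \<le> 0" using e(1) by (simp add: mult_le_0_iff)
    have "- g x \<le> M" using M(2) x(1) by (auto simp: abs_le_iff)
    then have "e * (- g x) \<le> e * M" using e(1) by (intro mult_left_mono) auto
    then have "f x \<le> v + \<delta>" using x(2) \<open>e * M \<le> \<delta>\<close> by simp
    then show ?thesis using x(1) \<open>g x \<le> 0\<close> unfolding A_def by blast
  qed
  have "closed A"
    unfolding A_def using continuous_closed_preimage[OF g compact_imp_closed[OF K] closed_atMost] .
  then have "compact A" using compact_Int_closed[OF K] by (metis A_def Int_assoc Int_absorb)
  moreover have "A \<noteq> {}" using near[of 1] by auto
  moreover have "continuous_on A f" using f by (rule continuous_on_subset) (simp add: A_def)
  ultimately obtain l where l: "l \<in> A" "\<forall>x\<in>A. f l \<le> f x" using continuous_attains_inf by blast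
  have "f l \<le> v"
  proof (rule field_le_epsilon)
    fix \<delta> :: real assume "0 < \<delta>"
    then obtain x where "x \<in> A" "f x \<le> v + \<delta>" using near by blast
    then show "f l \<le> v + \<delta>" using l(2) by fastforce
  qed
  then show ?thesis using l(1) unfolding A_def by auto
qed

lemma compact_convex_meets_nonpos_orthant:
  fixes C :: "'v::euclidean_space set"
  assumes "compact C" "convex C" "C \<noteq> {}"
    and nonneg_test: "\<And>y. \<forall>b\<in>Basis. 0 \<le> y \<bullet> b \<Longrightarrow> \<exists>z\<in>C. y \<bullet> z \<le> 0"
  shows "\<exists>z\<in>C. \<forall>b\<in>Basis. z \<bullet> b \<le> 0"
proof (rule ccontr)
  define N where "N = (\<Inter>b\<in>Basis. {z::'v. b \<bullet> z \<le> 0})"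
  assume "\<not> ?thesis"
  then have "C \<inter> N = {}" by (auto simp: N_def inner_commute)
  moreover have "closed N" "convex N"
    unfolding N_def by (auto intro!: closed_INT convex_INT closed_halfspace_le convex_halfspace_le)
  ultimately obtain a c where sep: "\<forall>x\<in>C. a \<bullet> x < c" "\<forall>z\<in>N. c < a \<bullet> z"
    using separating_hyperplane_compact_closed[OF assms(2,1,3)] by blast
  have "0 \<in> N" by (simp add: N_def)
  then have "c < 0" using sep(2) by fastforce
  have "0 \<le> (- a) \<bullet> b" if b: "b \<in> Basis" for b
  proof (rule ccontr)
    assume "\<not> 0 \<le> (- a) \<bullet> b"
    then have pos: "0 < a \<bullet> b" by simp
    define t where "t = c / (a \<bullet> b)"
    have "t \<le> 0" using pos \<open>c < 0\<close> by (simp add: t_def divide_nonpos_pos)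
    then have "t *\<^sub>R b \<in> N" using b by (auto simp: N_def inner_Basis)
    moreover have "a \<bullet> (t *\<^sub>R b) = c" using pos by (simp add: t_def)
    ultimately show False using sep(2) by fastforce
  qed
  then obtain z where "z \<in> C" "(- a) \<bullet> z \<le> 0" using nonneg_test by blast
  then show False using sep(1) \<open>c < 0\<close> by fastforce
qed

definition payoff_vec :: "('a::finite \<Rightarrow> 'w::finite \<Rightarrow> real) \<Rightarrow> real^'a^'w" where
  "payoff_vec u = (\<chi> \<omega> a. u a \<omega>)"

definition response_payoff_vec ::
    "('a::finite \<Rightarrow> 'w::finite \<Rightarrow> real) \<Rightarrow> real^'a^'a \<Rightarrow> real^'a^'w" where
  "response_payoff_vec u \<tau> = (\<chi> \<omega> m. \<Sum>a\<in>UNIV. \<tau> $ m $ a * u a \<omega>)"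

definition deviation_gain :: "('a::finite \<Rightarrow> 'w::finite \<Rightarrow> real) \<Rightarrow> real^'a^'w \<Rightarrow> real^'a^'a" where
  "deviation_gain u \<pi> = (\<chi> a b. \<Sum>\<omega>\<in>UNIV. \<pi> $ \<omega> $ a * (u b \<omega> - u a \<omega>))"

definition perturbed_obedient :: "real^'a::finite^'a \<Rightarrow> real \<Rightarrow> real^'a^'a" where
  "perturbed_obedient y e =
     (\<chi> m b. (if b = m then 1 else 0) + e * (y $ m $ b - (if b = m then \<Sum>c\<in>UNIV. y $ m $ c else 0)))"

lemma prob_simplex_component_bounds: "p \<in> prob_simplex \<Longrightarrow> 0 \<le> p $ i \<and> p $ i \<le> 1"
  unfolding prob_simplex_def using member_le_sum[of i UNIV "\<lambda>j. p $ j"] by auto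

lemma bounded_Pi_set:
  assumes "P \<subseteq> prob_simplex" and "\<forall>\<sigma>\<in>S. canonical_experiment \<sigma>"
  shows "bounded (Pi_set P S :: (real^'a::finite^'w::finite) set)"
proof (rule bounded_subset[OF bounded_cbox])
  show "Pi_set P S \<subseteq> cbox 0 1"
  proof
    fix x :: "real^'a^'w" assume "x \<in> Pi_set P S"
    then obtain p \<sigma> where x: "x = joint p \<sigma>" "p \<in> P" "\<sigma> \<in> S" by (auto simp: Pi_set_def)
    have "0 \<le> x $ \<omega> $ a \<and> x $ \<omega> $ a \<le> 1" for \<omega> a
      using x assms prob_simplex_component_bounds[of p \<omega>] prob_simplex_component_bounds[of "\<sigma> $ \<omega>" a]
      by (auto simp: joint_def canonical_experiment_def mult_le_one)
    then show "x \<in> cbox 0 1" by (auto simp: mem_box Basis_vec_def inner_axis)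
  qed
qed

lemma exp_payoff_eq_inner: "exp_payoff u \<pi> = payoff_vec u \<bullet> \<pi>"
  unfolding exp_payoff_def inner_nested_vec payoff_vec_def
  by (subst sum.swap) (simp add: mult.commute)

lemma Kstar_eq_inner_minimizers:
  "Kstar u P S = {\<pi> \<in> closure (convex hull (Pi_set P S)).
     \<forall>\<pi>'\<in>closure (convex hull (Pi_set P S)). payoff_vec u \<bullet> \<pi> \<le> payoff_vec u \<bullet> \<pi>'}"
  by (simp add: Kstar_def exp_payoff_eq_inner)

lemma compact_Kstar: "bounded (Pi_set P S) \<Longrightarrow> compact (Kstar u P S)"
  unfolding Kstar_eq_inner_minimizers by (intro compact_inner_minimizers) (simp add: bounded_convex_hull)

lemma convex_Kstar: "convex (Kstar u P S)"
  unfolding Kstar_eq_inner_minimizers by (intro convex_inner_minimizers convex_closure convex_convex_hull)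

lemma ur_val_eq_inner: "ur_val u p \<sigma> \<tau> = response_payoff_vec u \<tau> \<bullet> joint p \<sigma>"
  unfolding ur_val_def inner_nested_vec response_payoff_vec_def joint_def
  by (simp add: sum_distrib_left sum_distrib_right mult.commute mult.left_commute)

lemma Ur_eq_Inf_inner: "Ur u P S \<tau> = Inf ((\<lambda>\<pi>. response_payoff_vec u \<tau> \<bullet> \<pi>) ` Pi_set P S)"
  unfolding Ur_def Pi_set_def by (rule arg_cong[where f = Inf]) (auto simp: ur_val_eq_inner)

lemma response_payoff_vec_obedient: "response_payoff_vec u obedient = payoff_vec u"
  by (simp add: response_payoff_vec_def obedient_def payoff_vec_def vec_eq_iff
      if_distrib[of "\<lambda>x. x * _"] sum.delta cong: if_cong)

lemma inner_response_payoff_vec: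
  assumes rows: "\<And>m. (\<Sum>a\<in>UNIV. \<tau> $ m $ a) = 1"
  shows "response_payoff_vec u \<tau> \<bullet> \<pi> = payoff_vec u \<bullet> \<pi> + \<tau> \<bullet> deviation_gain u \<pi>"
proof -
  have "response_payoff_vec u \<tau> \<bullet> \<pi> = (\<Sum>m\<in>UNIV. \<Sum>a\<in>UNIV. \<Sum>\<omega>\<in>UNIV. \<tau> $ m $ a * \<pi> $ \<omega> $ m * u a \<omega>)"
  proof -
    have "response_payoff_vec u \<tau> \<bullet> \<pi> = (\<Sum>\<omega>\<in>UNIV. \<Sum>m\<in>UNIV. \<Sum>a\<in>UNIV. \<tau> $ m $ a * \<pi> $ \<omega> $ m * u a \<omega>)"
      unfolding inner_nested_vec response_payoff_vec_def
      by (simp add: sum_distrib_left sum_distrib_right mult.commute mult.left_commute)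
    also have "\<dots> = (\<Sum>m\<in>UNIV. \<Sum>\<omega>\<in>UNIV. \<Sum>a\<in>UNIV. \<tau> $ m $ a * \<pi> $ \<omega> $ m * u a \<omega>)"
      by (rule sum.swap)
    also have "\<dots> = (\<Sum>m\<in>UNIV. \<Sum>a\<in>UNIV. \<Sum>\<omega>\<in>UNIV. \<tau> $ m $ a * \<pi> $ \<omega> $ m * u a \<omega>)"
      by (rule sum.cong[OF refl], rule sum.swap)
    finally show ?thesis .
  qed
  moreover have "payoff_vec u \<bullet> \<pi> = (\<Sum>m\<in>UNIV. \<Sum>a\<in>UNIV. \<Sum>\<omega>\<in>UNIV. \<tau> $ m $ a * \<pi> $ \<omega> $ m * u m \<omega>)"
    unfolding inner_nested_vec payoff_vec_def
    by (subst sum.swap) (simp add: mult.assoc rows flip: sum_distrib_left sum_distrib_right,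
        simp add: mult.commute)
  moreover have "\<tau> \<bullet> deviation_gain u \<pi> =
      (\<Sum>m\<in>UNIV. \<Sum>a\<in>UNIV. \<Sum>\<omega>\<in>UNIV. \<tau> $ m $ a * \<pi> $ \<omega> $ m * u a \<omega>)
      - (\<Sum>m\<in>UNIV. \<Sum>a\<in>UNIV. \<Sum>\<omega>\<in>UNIV. \<tau> $ m $ a * \<pi> $ \<omega> $ m * u m \<omega>)"
    unfolding inner_nested_vec deviation_gain_def
    by (simp add: sum_distrib_left algebra_simps sum_subtractf)
  ultimately show ?thesis by simp
qed

lemma bounded_linear_deviation_gain: "bounded_linear (deviation_gain u)"
  unfolding linear_conv_bounded_linear[symmetric]
  by (rule linearI) (simp_all add: deviation_gain_def vec_eq_iff sum.distrib[symmetric]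
      sum_subtractf[symmetric] sum_distrib_left algebra_simps)

lemma receiver_strategy_obedient: "receiver_strategy obedient"
  by (simp add: receiver_strategy_def obedient_def prob_simplex_def)

lemma receiver_strategy_perturbed_obedient:
  assumes y: "\<forall>a b. 0 \<le> y $ a $ b" and "0 \<le> e"
    and small: "e * (\<Sum>a\<in>UNIV. \<Sum>b\<in>UNIV. y $ a $ b) \<le> 1"
  shows "receiver_strategy (perturbed_obedient y e)"
  unfolding receiver_strategy_def prob_simplex_def
proof (intro allI CollectI conjI)
  fix m b
  have "(\<Sum>c\<in>UNIV. y $ m $ c) \<le> (\<Sum>a\<in>UNIV. \<Sum>c\<in>UNIV. y $ a $ c)"
    using y by (intro member_le_sum[where f = "\<lambda>a. \<Sum>c\<in>UNIV. y $ a $ c"]) (auto intro: sum_nonneg)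
  then have "e * (\<Sum>c\<in>UNIV. y $ m $ c) \<le> 1"
    using \<open>0 \<le> e\<close> small mult_left_mono order_trans by blast
  moreover have "0 \<le> e * y $ m $ b" using y \<open>0 \<le> e\<close> by simp
  ultimately show "0 \<le> perturbed_obedient y e $ m $ b"
    by (auto simp: algebra_simps perturbed_obedient_def)
next
  fix m
  show "(\<Sum>b\<in>UNIV. perturbed_obedient y e $ m $ b) = 1"
    by (simp add: perturbed_obedient_def sum.distrib sum_subtractf algebra_simps
        flip: sum_distrib_left)
qed

lemma inner_perturbed_obedient_deviation_gain:
  "perturbed_obedient y e \<bullet> deviation_gain u \<pi> = e * (y \<bullet> deviation_gain u \<pi>)"
  unfolding inner_nested_vec sum_distrib_left
  by (intro sum.cong refl) (auto simp: perturbed_obedient_def deviation_gain_def)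

lemma Kstar_deviation_gain_nonpos_imp_obedient_BR:
  assumes ne: "Pi_set P S \<noteq> {}" and bd: "bounded (Pi_set P S)"
    and \<pi>: "\<pi> \<in> Kstar u P S" and nonpos: "\<forall>a b. deviation_gain u \<pi> $ a $ b \<le> 0"
  shows "obedient \<in> BR u P S"
proof -
  define K where "K = closure (convex hull (Pi_set P S))"
  have "Pi_set P S \<subseteq> K" unfolding K_def using hull_subset[of _ convex] closure_subset by (rule subset_trans)
  have "\<pi> \<in> K" and min: "\<forall>x\<in>K. payoff_vec u \<bullet> \<pi> \<le> payoff_vec u \<bullet> x"
    using \<pi> by (auto simp: Kstar_eq_inner_minimizers K_def)
  have "Ur u P S \<tau> \<le> Ur u P S obedient" if \<tau>: "receiver_strategy \<tau>" for \<tau>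
  proof -
    have "Ur u P S \<tau> \<le> response_payoff_vec u \<tau> \<bullet> \<pi>"
      using Inf_inner_le_closure_convex_hull[OF bd] \<open>\<pi> \<in> K\<close> by (simp add: Ur_eq_Inf_inner K_def)
    also have "\<dots> = payoff_vec u \<bullet> \<pi> + \<tau> \<bullet> deviation_gain u \<pi>"
      using \<tau> by (simp add: inner_response_payoff_vec receiver_strategy_def prob_simplex_def)
    also have "\<dots> \<le> payoff_vec u \<bullet> \<pi>"
      using \<tau> nonpos unfolding inner_nested_vec receiver_strategy_def prob_simplex_def
      by (simp add: sum_nonpos mult_nonneg_nonpos)
    also have "\<dots> \<le> Ur u P S obedient"
      unfolding Ur_eq_Inf_inner response_payoff_vec_obedient
      using ne min \<open>Pi_set P S \<subseteq> K\<close> by (intro cInf_greatest) auto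
    finally show ?thesis .
  qed
  then show ?thesis using receiver_strategy_obedient by (simp add: BR_def)
qed

lemma obedient_BR_imp_Kstar_inner_deviation_gain_nonpos:
  fixes u :: "'a::finite \<Rightarrow> 'w::finite \<Rightarrow> real" and y :: "real^'a^'a"
  assumes ne: "Pi_set P S \<noteq> {}" and bd: "bounded (Pi_set P S)"
    and br: "obedient \<in> BR u P S" and y: "\<forall>a b. 0 \<le> y $ a $ b"
  shows "\<exists>\<pi>\<in>Kstar u P S. y \<bullet> deviation_gain u \<pi> \<le> 0"
proof -
  define K where "K = closure (convex hull (Pi_set P S))"
  define v where "v = Ur u P S obedient"
  define Y where "Y = (\<Sum>a\<in>UNIV. \<Sum>b\<in>UNIV. y $ a $ b)"
  have "0 \<le> Y" using y by (simp add: Y_def sum_nonneg)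
  have v: "\<forall>x\<in>K. v \<le> payoff_vec u \<bullet> x"
    using Inf_inner_le_closure_convex_hull[OF bd]
    by (simp add: K_def v_def Ur_eq_Inf_inner response_payoff_vec_obedient)
  have perturbed: "\<exists>x\<in>K. payoff_vec u \<bullet> x + e * (y \<bullet> deviation_gain u x) \<le> v"
    if "0 < e" "e \<le> 1 / (1 + Y)" for e
  proof -
    define \<tau> where "\<tau> = perturbed_obedient y e"
    have "e * Y \<le> Y / (1 + Y)"
      using mult_right_mono[OF that(2) \<open>0 \<le> Y\<close>] by simp
    also have "\<dots> \<le> 1" using \<open>0 \<le> Y\<close> by simp
    finally have \<tau>: "receiver_strategy \<tau>"
      using receiver_strategy_perturbed_obedient[OF y] that(1) by (simp add: \<tau>_def Y_def)
    obtain x where x: "x \<in> K" "response_payoff_vec u \<tau> \<bullet> x \<le> Ur u P S \<tau>"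
      using closure_convex_hull_attains_Inf_inner[OF bd ne] by (auto simp: K_def Ur_eq_Inf_inner)
    have "Ur u P S \<tau> \<le> v" using br \<tau> by (simp add: BR_def v_def)
    moreover have "response_payoff_vec u \<tau> \<bullet> x = payoff_vec u \<bullet> x + e * (y \<bullet> deviation_gain u x)"
      using \<tau> by (simp add: inner_response_payoff_vec receiver_strategy_def prob_simplex_def
          \<tau>_def inner_perturbed_obedient_deviation_gain)
    ultimately show ?thesis using x by (intro bexI[OF _ x(1)]) linarith
  qed
  have "compact K" using bd by (simp add: K_def bounded_convex_hull)
  moreover have "continuous_on K (deviation_gain u)"
    by (rule linear_continuous_on[OF bounded_linear_deviation_gain])
  ultimately have "\<exists>\<pi>\<in>K. payoff_vec u \<bullet> \<pi> \<le> v \<and> y \<bullet> deviation_gain u \<pi> \<le> 0"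
    using \<open>0 \<le> Y\<close>
    by (intro exists_minimizer_nonpos_of_perturbed_le[OF _ _ _ v _ perturbed]) (auto intro!: continuous_intros)
  then obtain \<pi> where \<pi>: "\<pi> \<in> K" "payoff_vec u \<bullet> \<pi> \<le> v" "y \<bullet> deviation_gain u \<pi> \<le> 0"
    by blast
  have "\<pi> \<in> Kstar u P S"
    using \<pi>(1,2) v unfolding Kstar_eq_inner_minimizers K_def[symmetric] by (blast intro: order_trans)
  with \<pi>(3) show ?thesis by blast
qed

lemma obedient_BR_imp_Kstar_deviation_gain_nonpos:
  assumes ne: "Pi_set P S \<noteq> {}" and bd: "bounded (Pi_set P S)" and br: "obedient \<in> BR u P S"
  shows "\<exists>\<pi>\<in>Kstar u P S. \<forall>a b. deviation_gain u \<pi> $ a $ b \<le> 0"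
proof -
  have "\<exists>g\<in>deviation_gain u ` Kstar u P S. \<forall>b\<in>Basis. g \<bullet> b \<le> 0"
  proof (rule compact_convex_meets_nonpos_orthant)
    show "compact (deviation_gain u ` Kstar u P S)"
      by (intro compact_continuous_image linear_continuous_on bounded_linear_deviation_gain
          compact_Kstar bd)
    show "convex (deviation_gain u ` Kstar u P S)"
      by (intro convex_linear_image bounded_linear.linear[OF bounded_linear_deviation_gain] convex_Kstar)
    show "deviation_gain u ` Kstar u P S \<noteq> {}"
      using obedient_BR_imp_Kstar_inner_deviation_gain_nonpos[OF ne bd br, of 0] by auto
    fix y :: "real^'a^'a" assume "\<forall>b\<in>Basis. 0 \<le> y \<bullet> b"
    then show "\<exists>g\<in>deviation_gain u ` Kstar u P S. y \<bullet> g \<le> 0"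
      using obedient_BR_imp_Kstar_inner_deviation_gain_nonpos[OF ne bd br]
      by (auto simp: nonneg_Basis_iff_nested)
  qed
  then show ?thesis by (simp add: nonneg_Basis_iff_nested[of "- g" for g, simplified])
qed

theorem mainTheorem6:
  fixes u :: "'a::finite \<Rightarrow> 'w::finite \<Rightarrow> real"
    and P :: "(real^'w) set"
    and S :: "(real^'a^'w) set"
  assumes "P \<noteq> {}" and "closed P" and "convex P" and "P \<subseteq> prob_simplex"
    and "canonical_ambiguous_experiment S"
  shows "obedient \<in> BR u P S \<longleftrightarrow>
    (\<exists>\<pi>\<in>Kstar u P S. \<forall>a b. (\<Sum>\<omega>\<in>UNIV. \<pi> $ \<omega> $ a * (u b \<omega> - u a \<omega>)) \<le> 0)"
proof -
  have S: "S \<noteq> {}" "\<forall>\<sigma>\<in>S. canonical_experiment \<sigma>"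
    using assms(5) by (auto simp: canonical_ambiguous_experiment_def)
  have ne: "Pi_set P S \<noteq> {}" using assms(1) S(1) by (auto simp: Pi_set_def)
  have bd: "bounded (Pi_set P S)" using assms(4) S(2) by (rule bounded_Pi_set)
  have "obedient \<in> BR u P S \<longleftrightarrow> (\<exists>\<pi>\<in>Kstar u P S. \<forall>a b. deviation_gain u \<pi> $ a $ b \<le> 0)"
    using obedient_BR_imp_Kstar_deviation_gain_nonpos[OF ne bd]
      Kstar_deviation_gain_nonpos_imp_obedient_BR[OF ne bd] by blast
  then show ?thesis by (simp add: deviation_gain_def)
qed

end
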